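(* Let $X$ be a topological vector space over $\mathbb{K}$ ($\mathbb{K}=\mathbb{R}$ or $\mathbb{C}$), let $Y$ be a linear subspace of $X$, and let $\alpha$ be a cardinal with $w(X)\le \mathrm{codim}(Y)=\alpha$. Then $X\setminus Y$ is $\alpha$-dense-lineable in $X$, i.e., there is a dense linear subspace $Z$ of $X$ with $\dim(Z)=\alpha$ and $Z\subset (X\setminus Y)\cup\{0\}$.
   Context: A topological vector space is a vector space with a topology making addition and scalar multiplication continuous. The weight $w(X)$ of a topological space $X$ is the smallest cardinality of a base for its topology. $\mathrm{codim}(Y)$ denotes the dimension of the quotient $X/Y$. *)

theory Defs
  imports "HOL-Analysis.Analysis"
begin


definition tvs :: "('k::{field,topological_space} \<Rightarrow> 'v::{ab_group_add,topological_space} \<Rightarrow> 'v) \<Rightarrow> bool" where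
  "tvs sm \<longleftrightarrow> vector_space sm
     \<and> continuous_on UNIV (\<lambda>p::'v \<times> 'v. fst p + snd p)
     \<and> continuous_on UNIV (\<lambda>p::'k \<times> 'v. sm (fst p) (snd p))"

text \<open>w(X) \<le> |A|: the weight (least cardinality of a base) is at most |A|, i.e.
  there is a base of the topology of cardinality at most |A|.\<close>
definition weight_le :: "'c set \<Rightarrow> 'v::topological_space itself \<Rightarrow> bool" where
  "weight_le A _ \<longleftrightarrow> (\<exists>\<B>::'v set set. topological_basis \<B> \<and> (card_of \<B>, card_of A) \<in> ordLeq)"

text \<open>B is (a set of representatives of) a basis of the quotient X/Y:
  linearly independent modulo Y and spanning X together with Y.\<close>
definition quotient_basis :: "('k::field \<Rightarrow> 'v::ab_group_add \<Rightarrow> 'v) \<Rightarrow> 'v set \<Rightarrow> 'v set \<Rightarrow> bool" where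
  "quotient_basis sm Y B \<longleftrightarrow>
     (\<forall>F c. finite F \<and> F \<subseteq> B \<and> (\<Sum>b\<in>F. sm (c b) b) \<in> Y \<longrightarrow> (\<forall>b\<in>F. c b = 0))
     \<and> module.span sm (Y \<union> B) = UNIV"

definition codim_eq :: "('k::field \<Rightarrow> 'v::ab_group_add \<Rightarrow> 'v) \<Rightarrow> 'v set \<Rightarrow> 'c set \<Rightarrow> bool" where
  "codim_eq sm Y A \<longleftrightarrow> (\<exists>B. quotient_basis sm Y B \<and> (card_of B, card_of A) \<in> ordIso)"

definition dim_eq :: "('k::field \<Rightarrow> 'v::ab_group_add \<Rightarrow> 'v) \<Rightarrow> 'v set \<Rightarrow> 'c set \<Rightarrow> bool" where
  "dim_eq sm Z A \<longleftrightarrow> (\<exists>B. \<not> module.dependent sm B \<and> module.span sm B = Z \<and> (card_of B, card_of A) \<in> ordIso)"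

definition dense_lineable :: "('k::field \<Rightarrow> 'v::{ab_group_add,topological_space} \<Rightarrow> 'v) \<Rightarrow> 'c set \<Rightarrow> 'v set \<Rightarrow> bool" where
  "dense_lineable sm A S \<longleftrightarrow>
     (\<exists>Z. module.subspace sm Z \<and> closure Z = UNIV \<and> dim_eq sm Z A \<and> Z \<subseteq> S \<union> {0})"

end

(*
  Fix a basis B of X modulo Y (so |B| = alpha) and a linear projection p with p(Y) = 0 and p b = b
  on B, and use w(X) <= alpha to index a pi-base (U a) of nonempty open sets by a in alpha.
  Well-order alpha as an initial ordinal and choose, by transfinite recursion, f a in U a such that
  p (f a) is not in the span of the earlier p (f b). This is possible because a proper subspace of a
  topological vector space contains no nonempty open set, while fewer than |B| vectors cannot span
  the subspace p(X), which contains B. The vectors p (f a) are then independent, so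
  Z = span (f ` alpha) has dimension alpha and p is injective on Z, whence Z meets Y only in 0;
  Z is dense because it meets every U a.
*)
theory Submission
  imports Defs
begin

unbundle cardinal_syntax

lemma tvs_subspace_eq_UNIV_if_open_subset:
  fixes sm :: "'k::{field,perfect_space} \<Rightarrow> 'v::{ab_group_add,topological_space} \<Rightarrow> 'v"
  assumes tvs: "tvs sm" and W: "module.subspace sm W"
    and U: "open U" "u \<in> U" "U \<subseteq> W"
  shows "W = UNIV"
proof -
  interpret vector_space sm
    using tvs unfolding tvs_def by auto
  have add_cont: "continuous_on UNIV (\<lambda>p::'v \<times> 'v. fst p + snd p)"
    and scale_cont: "continuous_on UNIV (\<lambda>p::'k \<times> 'v. sm (fst p) (snd p))"
    using tvs unfolding tvs_def by auto
  have "u \<in> W"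
    using U by auto
  have "x \<in> W" for x
  proof -
    have "continuous_on UNIV (\<lambda>t::'k. (t, x))"
      by (intro continuous_intros)
    then have "continuous_on UNIV (\<lambda>t::'k. (u, sm t x))"
      using continuous_on_compose2[OF scale_cont, of UNIV "\<lambda>t. (t, x)"]
      by (simp add: continuous_on_Pair continuous_on_const)
    then have "continuous_on UNIV (\<lambda>t::'k. u + sm t x)"
      using continuous_on_compose2[OF add_cont, of UNIV "\<lambda>t. (u, sm t x)"] by simp
    then have "open ((\<lambda>t. u + sm t x) -` U)"
      using U by (simp add: continuous_on_open_vimage)
    then have "(\<lambda>t. u + sm t x) -` U \<noteq> {0}"
      using not_open_singleton by metis
    moreover have "0 \<in> (\<lambda>t. u + sm t x) -` U"
      using U by simp
    ultimately obtain t where t: "t \<noteq> 0" "u + sm t x \<in> U"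
      by blast
    then have "(u + sm t x) - u \<in> W"
      using U \<open>u \<in> W\<close> subspace_diff[OF W] by blast
    then show ?thesis
      using subspace_scale[OF W, of "sm t x" "inverse t"] t(1) by simp
  qed
  then show ?thesis by auto
qed

context vector_space
begin

lemma card_of_independent_le_spanning:
  assumes "independent B" "B \<subseteq> span S"
  shows "|B| \<le>o |S|"
proof -
  obtain S' where S': "S' \<subseteq> S" "independent S'" "S \<subseteq> span S'"
    by (rule maximal_independent_subset)
  obtain B' where B': "B \<subseteq> B'" "B' \<subseteq> span S" "independent B'" "span S \<subseteq> span B'"
    by (rule maximal_independent_subset_extend[OF assms(2,1)])
  have "span B' = span S'"
    using S' B' by (metis span_mono span_span subset_antisym)
  then obtain h where "bij_betw h B' S'"
    using bij_if_span_eq_span_bases B'(3) S'(2) by blast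
  then have "(card_of B', card_of S') \<in> ordIso"
    by (rule card_of_ordIsoI)
  moreover have "|B| \<le>o |B'|" "|S'| \<le>o |S|"
    using B'(1) S'(1) by (auto intro: card_of_mono1)
  ultimately show ?thesis
    by (meson ordLeq_ordIso_trans ordLeq_transitive)
qed

lemma inj_on_if_notin_span_underS:
  assumes "Well_order r" and notin: "\<And>a. a \<in> Field r \<Longrightarrow> g a \<notin> span (g ` underS r a)"
  shows "inj_on g (Field r)"
proof (rule inj_onI, rule ccontr)
  fix a b assume ab: "a \<in> Field r" "b \<in> Field r" "g a = g b" "a \<noteq> b"
  have "(a, b) \<in> r \<or> (b, a) \<in> r"
    using wo_rel.TOTALS[of r] assms(1) ab(1,2) by (simp add: wo_rel_def)
  then have "a \<in> underS r b \<or> b \<in> underS r a"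
    using ab(4) unfolding underS_def by blast
  then have "g b \<in> span (g ` underS r b) \<or> g a \<in> span (g ` underS r a)"
    using ab(3) by (metis image_eqI span_base)
  then show False
    using notin ab(1,2) by blast
qed

lemma independent_if_notin_span_underS:
  assumes "Well_order r" and notin: "\<And>a. a \<in> Field r \<Longrightarrow> g a \<notin> span (g ` underS r a)"
  shows "independent (g ` Field r)"
proof -
  have wo: "wo_rel r"
    using assms(1) by (simp add: wo_rel_def)
  have directed: "g ` under r a \<subseteq> g ` under r b \<or> g ` under r b \<subseteq> g ` under r a" for a b
    using wo_rel.ofilter_linord[OF wo wo_rel.under_ofilter[OF wo] wo_rel.under_ofilter[OF wo]]
    by (meson image_mono)
  \<comment> \<open>at limit stages, independence passes to the directed union of the earlier segments\<close>
  have under: "independent (g ` under r a)" for a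
  proof (induction a rule: wo_rel.well_order_induct[OF wo])
    case (1 a)
    show ?case
    proof (cases "a \<in> Field r")
      case True
      have "underS r a = (\<Union>b\<in>underS r a. under r b)"
        using wo_rel.ofilter_under_UNION[OF wo wo_rel.underS_ofilter[OF wo]] .
      then have "g ` underS r a = (\<Union>b\<in>underS r a. g ` under r b)"
        by (metis image_UN)
      moreover have "independent (g ` under r b)" if "b \<in> underS r a" for b
        using 1 that unfolding underS_def by blast
      moreover have "independent (\<Union>b\<in>underS r a. g ` under r b)"
        by (rule independent_Union_directed) (use directed calculation(2) in blast)+
      ultimately have "independent (g ` underS r a)"
        by simp
      moreover have "g ` under r a = insert (g a) (g ` underS r a)"
        using Refl_under_underS[OF wo_rel.REFL[OF wo] True] by auto
      ultimately show ?thesis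
        using independent_insertI notin[OF True] by simp
    next
      case False
      then have "under r a = {}"
        unfolding under_def Field_def by blast
      then show ?thesis
        using independent_empty by simp
    qed
  qed
  have "independent (\<Union>a\<in>Field r. g ` under r a)"
    by (rule independent_Union_directed) (use directed under in blast)+
  moreover have "g ` Field r = (\<Union>a\<in>Field r. g ` under r a)"
    using wo_rel.ofilter_under_UNION[OF wo wo_rel.Field_ofilter[OF wo]] by (metis image_UN)
  ultimately show ?thesis
    by simp
qed

lemma independent_Un_if_independent_mod:
  assumes Y: "subspace Y" and C: "independent C" "C \<subseteq> Y"
    and indep_mod: "\<And>F c. finite F \<Longrightarrow> F \<subseteq> B \<Longrightarrow> (\<Sum>b\<in>F. scale (c b) b) \<in> Y \<Longrightarrow>
      \<forall>b\<in>F. c b = 0"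
  shows "independent (C \<union> B)"
  unfolding independent_explicit_finite_subsets
proof (intro allI impI ballI)
  fix S u v assume S: "S \<subseteq> C \<union> B" "finite S" and sum_0: "(\<Sum>v\<in>S. scale (u v) v) = 0"
    and "v \<in> S"
  have split: "(\<Sum>v\<in>S. scale (u v) v) = (\<Sum>v\<in>S \<inter> B. scale (u v) v) + (\<Sum>v\<in>S - B. scale (u v) v)"
    using S(2) by (metis sum.Int_Diff)
  have "(\<Sum>v\<in>S - B. scale (u v) v) \<in> Y"
    using S C(2) by (intro subspace_sum[OF Y] subspace_scale[OF Y]) auto
  moreover have "(\<Sum>v\<in>S \<inter> B. scale (u v) v) = - (\<Sum>v\<in>S - B. scale (u v) v)"
    using sum_0 split by (simp add: eq_neg_iff_add_eq_0)
  ultimately have "(\<Sum>v\<in>S \<inter> B. scale (u v) v) \<in> Y"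
    using subspace_neg[OF Y] by simp
  then have B_coeffs: "\<forall>b\<in>S \<inter> B. u b = 0"
    using indep_mod[of "S \<inter> B" u] S by auto
  then have "(\<Sum>v\<in>S - B. scale (u v) v) = 0"
    using sum_0 split by simp
  then have "\<forall>v\<in>S - B. u v = 0"
    using C(1)[unfolded independent_explicit_finite_subsets] S
    by (metis Diff_subset_conv finite_Diff sup_commute)
  then show "u v = 0"
    using B_coeffs \<open>v \<in> S\<close> by auto
qed

end

lemma (in vector_space_pair) independent_if_independent_linear_image:
  assumes f: "Vector_Spaces.linear s1 s2 f" and ind: "vs2.independent (f ` S)" and inj: "inj_on f S"
  shows "vs1.independent S"
proof
  assume "vs1.dependent S"
  then obtain x where x: "x \<in> S" "x \<in> vs1.span (S - {x})"
    by (auto simp: vs1.dependent_def)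
  then have "f x \<in> vs2.span (f ` (S - {x}))"
    using linear_span_image[OF f] by (metis imageI)
  moreover have "f ` (S - {x}) = f ` S - {f x}"
    using inj x(1) by (auto simp: inj_on_def)
  ultimately have "vs2.dependent (f ` S)"
    using x(1) by (auto simp: vs2.dependent_def)
  with ind show False
    by contradiction
qed

lemma exists_projection_along_subspace:
  fixes sm :: "'k::field \<Rightarrow> 'v::ab_group_add \<Rightarrow> 'v"
  assumes "vector_space sm" and Y: "module.subspace sm Y"
    and indep_mod: "\<And>F c. finite F \<Longrightarrow> F \<subseteq> B \<Longrightarrow> (\<Sum>b\<in>F. sm (c b) b) \<in> Y \<Longrightarrow>
      \<forall>b\<in>F. c b = 0"
  shows "\<exists>p. Vector_Spaces.linear sm sm p \<and> (\<forall>y\<in>Y. p y = 0) \<and> (\<forall>b\<in>B. p b = b)"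
proof -
  interpret vector_space_pair sm sm
    using assms(1) by (simp add: vector_space_pair_def)
  obtain C where C: "C \<subseteq> Y" "vs1.independent C" "Y \<subseteq> vs1.span C"
    by (rule vs1.maximal_independent_subset)
  have span_C: "vs1.span C = Y"
    using C Y vs1.span_minimal by blast
  have indep: "vs1.independent (C \<union> B)"
    by (rule vs1.independent_Un_if_independent_mod[OF Y C(2,1) indep_mod])
  have "B \<inter> Y = {}"
    using indep_mod[of "{b}" "\<lambda>_. 1" for b] by auto
  define p where "p = construct (C \<union> B) (\<lambda>x. if x \<in> B then x else 0)"
  have linear: "Vector_Spaces.linear sm sm p"
    unfolding p_def by (rule linear_construct[OF indep])
  show ?thesis
  proof (intro exI conjI ballI)
    show "p y = 0" if "y \<in> Y" for y
    proof -
      have "p c = 0" if "c \<in> C" for c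
        unfolding p_def using construct_basis[OF indep] that C(1) \<open>B \<inter> Y = {}\<close> by auto
      then show ?thesis
        using linear_eq_0_on_span[OF linear] span_C that by blast
    qed
    show "p b = b" if "b \<in> B" for b
      unfolding p_def using construct_basis[OF indep] that by auto
  qed (fact linear)
qed

lemma (in wo_rel) transfinite_choice:
  assumes "\<And>g a. a \<in> Field r \<Longrightarrow> \<exists>x. P (g ` underS a) a x"
  obtains f where "\<And>a. a \<in> Field r \<Longrightarrow> P (f ` underS a) a (f a)"
proof -
  define H where "H f a = (SOME x. P (f ` underS a) a x)" for f a
  have "adm_wo H"
    unfolding adm_wo_def H_def by (metis image_cong)
  then have fixpoint: "worec H a = H (worec H) a" for a
    by (metis worec_fixpoint)
  show ?thesis
  proof (rule that)
    fix a assume "a \<in> Field r"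
    have "P (worec H ` underS a) a (H (worec H) a)"
      unfolding H_def by (rule someI_ex[OF assms[OF \<open>a \<in> Field r\<close>]])
    then show "P (worec H ` underS a) a (worec H a)"
      by (simp only: fixpoint[symmetric])
  qed
qed

lemma weight_le_pi_base:
  assumes "weight_le A TYPE('v::topological_space)"
  obtains U :: "'c \<Rightarrow> 'v::topological_space set"
  where "\<forall>a\<in>A. open (U a) \<and> U a \<noteq> {}"
    and "\<forall>S. open S \<and> S \<noteq> {} \<longrightarrow> (\<exists>a\<in>A. U a \<subseteq> S)"
proof -
  obtain \<B> :: "'v set set" where \<B>: "topological_basis \<B>" and "|\<B>| \<le>o |A|"
    using assms unfolding weight_le_def by auto
  then have "|\<B> - {{}}| \<le>o |A|"
    by (meson Diff_subset card_of_mono1 ordLeq_transitive)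
  moreover have "\<B> - {{}} \<noteq> {}"
    using topological_basisE[OF \<B> open_UNIV, of undefined] by blast
  ultimately obtain U where U: "U ` A = \<B> - {{}}"
    by (metis card_of_ordLeq2)
  show ?thesis
  proof
    have "U a \<in> \<B> - {{}}" if "a \<in> A" for a
      using U that by blast
    then show "\<forall>a\<in>A. open (U a) \<and> U a \<noteq> {}"
      using topological_basis_open[OF \<B>] by blast
    show "\<forall>S. open S \<and> S \<noteq> {} \<longrightarrow> (\<exists>a\<in>A. U a \<subseteq> S)"
    proof (intro allI impI)
      fix S :: "'v set" assume "open S \<and> S \<noteq> {}"
      then obtain x where "x \<in> S"
        by blast
      then obtain Q where "Q \<in> \<B>" "x \<in> Q" "Q \<subseteq> S"
        using topological_basisE[OF \<B>] \<open>open S \<and> S \<noteq> {}\<close> by blast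
      then have "Q \<in> U ` A"
        unfolding U by blast
      then show "\<exists>a\<in>A. U a \<subseteq> S"
        using \<open>Q \<subseteq> S\<close> by blast
    qed
  qed
qed

lemma tvs_open_not_subset_vimage_span:
  fixes sm :: "'k::{field,perfect_space} \<Rightarrow> 'v::{ab_group_add,topological_space} \<Rightarrow> 'v"
    and sm' :: "'k \<Rightarrow> 'w::ab_group_add \<Rightarrow> 'w"
  assumes tvs: "tvs sm" and p: "Vector_Spaces.linear sm sm' p"
    and B: "\<not> module.dependent sm' B" "B \<subseteq> range p" and small: "|S| <o |B|"
    and U: "open U" "U \<noteq> {}"
  shows "\<exists>x\<in>U. p x \<notin> module.span sm' S"
proof (rule ccontr)
  interpret vector_space_pair sm sm'
    using p unfolding Vector_Spaces.linear_iff vector_space_pair_def by auto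
  assume "\<not> ?thesis"
  then have "U \<subseteq> p -` vs2.span S"
    by auto
  moreover have "vs1.subspace (p -` vs2.span S)"
    by (rule linear_subspace_vimage[OF p vs2.subspace_span])
  ultimately have "p -` vs2.span S = UNIV"
    using tvs_subspace_eq_UNIV_if_open_subset[OF tvs] U by blast
  then have "B \<subseteq> vs2.span S"
    using B(2) by auto
  then have "|B| \<le>o |S|"
    using vs2.card_of_independent_le_spanning B(1) by blast
  with small show False
    using not_ordLess_ordLeq by blast
qed

lemma dense_lineable_if_independent_selection:
  fixes sm :: "'k::field \<Rightarrow> 'v::{ab_group_add,topological_space} \<Rightarrow> 'v"
  assumes "vector_space sm"
    and pi_base: "\<forall>S. open S \<and> S \<noteq> {} \<longrightarrow> (\<exists>a\<in>A. U a \<subseteq> S)"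
    and f: "\<forall>a\<in>A. f a \<in> U a" "inj_on f A" "\<not> module.dependent sm (f ` A)"
    and disjoint: "module.span sm (f ` A) \<inter> Y \<subseteq> {0}"
  shows "dense_lineable sm A (UNIV - Y)"
  unfolding dense_lineable_def
proof (intro exI conjI)
  interpret vector_space sm
    by fact
  show "subspace (span (f ` A))"
    by (rule subspace_span)
  have "x \<in> closure (span (f ` A))" for x
    unfolding closure_iff_nhds_not_empty
  proof (intro allI impI)
    fix T S assume "S \<subseteq> T" "open S" "x \<in> S"
    then obtain a where "a \<in> A" "U a \<subseteq> S"
      using pi_base by blast
    then have "f a \<in> span (f ` A) \<inter> T"
      using f(1) \<open>S \<subseteq> T\<close> by (auto intro: span_base)
    then show "span (f ` A) \<inter> T \<noteq> {}"
      by blast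
  qed
  then show "closure (span (f ` A)) = UNIV"
    by blast
  show "dim_eq sm (span (f ` A)) A"
    unfolding dim_eq_def
  proof (intro exI conjI)
    show "(card_of (f ` A), card_of A) \<in> ordIso"
      using card_of_ordIsoI[of f A "f ` A"] f(2) ordIso_symmetric
      by (auto simp: bij_betw_def)
  qed (use f(3) in auto)
  show "span (f ` A) \<subseteq> (UNIV - Y) \<union> {0}"
    using disjoint by blast
qed

lemma tvs_transfinite_independent_selection:
  fixes sm :: "'k::{field,perfect_space} \<Rightarrow> 'v::{ab_group_add,topological_space} \<Rightarrow> 'v"
    and sm' :: "'k \<Rightarrow> 'w::ab_group_add \<Rightarrow> 'w" and A :: "'c set"
  assumes tvs: "tvs sm" and p: "Vector_Spaces.linear sm sm' p"
    and B: "\<not> module.dependent sm' B" "B \<subseteq> range p" "|A| \<le>o |B|"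
    and U: "\<forall>a\<in>A. open (U a) \<and> U a \<noteq> {}"
  obtains f where "\<forall>a\<in>A. f a \<in> U a" "inj_on f A" "\<not> module.dependent sm (f ` A)"
    "inj_on p (module.span sm (f ` A))"
proof -
  interpret vector_space_pair sm sm'
    using p unfolding Vector_Spaces.linear_iff vector_space_pair_def by auto
  have wo: "wo_rel |A|"
    by (simp add: wo_rel_def card_of_Well_order)
  \<comment> \<open>|A| is an initial ordinal: its proper initial segments are smaller than A, hence than B\<close>
  have "\<exists>x. x \<in> U a \<and> p x \<notin> vs2.span (p ` g ` underS (card_of A) a)" if "a \<in> A" for g a
  proof -
    have "|p ` g ` underS (card_of A) a| \<le>o |underS (card_of A) a|"
      by (metis card_of_image image_comp)
    moreover have "|underS (card_of A) a| <o |A|"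
      by (rule card_of_underS[OF card_of_Card_order]) (simp add: Field_card_of that)
    ultimately have "|p ` g ` underS (card_of A) a| <o |B|"
      using B(3) ordLeq_ordLess_trans ordLess_ordLeq_trans by blast
    then have "\<exists>x\<in>U a. p x \<notin> vs2.span (p ` g ` underS (card_of A) a)"
      using tvs_open_not_subset_vimage_span[OF tvs p B(1,2)] U that by simp
    then show ?thesis
      by blast
  qed
  then obtain f where f: "\<And>a. a \<in> A \<Longrightarrow> f a \<in> U a \<and> p (f a) \<notin> vs2.span (p ` f ` underS (card_of A) a)"
    using wo_rel.transfinite_choice[OF wo, of "\<lambda>S a x. x \<in> U a \<and> p x \<notin> vs2.span (p ` S)"]
    by (metis Field_card_of)
  have "vs2.independent ((p \<circ> f) ` A)" "inj_on (p \<circ> f) A"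
    using vs2.independent_if_notin_span_underS[of "card_of A" "p \<circ> f"]
      vs2.inj_on_if_notin_span_underS[of "card_of A" "p \<circ> f"] f
    by (simp_all add: card_of_well_order_on Field_card_of image_comp)
  then have "vs2.independent (p ` f ` A)" "inj_on p (f ` A)" "inj_on f A"
    by (simp_all add: image_comp comp_inj_on_iff inj_on_imageI inj_on_imageI2)
  moreover have "\<forall>a\<in>A. f a \<in> U a"
    using f by blast
  ultimately show ?thesis
    using that independent_if_independent_linear_image[OF p]
      linear_inj_on_span_independent_image[OF p] by blast
qed

lemma tvs_dense_lineable_complement:
  fixes sm :: "'k::{field,perfect_space} \<Rightarrow> 'v::{ab_group_add,topological_space} \<Rightarrow> 'v"
    and A :: "'c set"
  assumes tvs: "tvs sm" and Y: "module.subspace sm Y"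
    and weight: "weight_le A TYPE('v)" and codim: "codim_eq sm Y A"
  shows "dense_lineable sm A (UNIV - Y)"
proof -
  interpret vector_space sm
    using tvs unfolding tvs_def by auto
  obtain B where "quotient_basis sm Y B" and BA: "(card_of B, card_of A) \<in> ordIso"
    using codim unfolding codim_eq_def by blast
  then have indep_mod: "\<And>F c. finite F \<Longrightarrow> F \<subseteq> B \<Longrightarrow> (\<Sum>b\<in>F. sm (c b) b) \<in> Y \<Longrightarrow>
      \<forall>b\<in>F. c b = 0"
    unfolding quotient_basis_def by blast
  then have "independent B"
    unfolding independent_explicit_finite_subsets using subspace_0[OF Y] by auto
  obtain p where p: "Vector_Spaces.linear sm sm p" "\<forall>y\<in>Y. p y = 0" "\<forall>b\<in>B. p b = b"
    using exists_projection_along_subspace[OF vector_space_axioms Y indep_mod] by blast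
  then have "B \<subseteq> range p"
    by (metis rangeI subsetI)
  obtain U :: "'c \<Rightarrow> 'v set" where U: "\<forall>a\<in>A. open (U a) \<and> U a \<noteq> {}"
      "\<forall>S. open S \<and> S \<noteq> {} \<longrightarrow> (\<exists>a\<in>A. U a \<subseteq> S)"
    by (rule weight_le_pi_base[OF weight])
  obtain f where f: "\<forall>a\<in>A. f a \<in> U a" "inj_on f A" "independent (f ` A)" "inj_on p (span (f ` A))"
    by (rule tvs_transfinite_independent_selection[OF tvs p(1) \<open>independent B\<close> \<open>B \<subseteq> range p\<close>
          ordIso_iff_ordLeq[THEN iffD1, OF ordIso_symmetric[OF BA], THEN conjunct1] U(1)])
  have "span (f ` A) \<inter> Y \<subseteq> {0}"
  proof
    fix z assume "z \<in> span (f ` A) \<inter> Y"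
    then have "p z = p 0" "z \<in> span (f ` A)"
      using p(2) subspace_0[OF Y] by auto
    then show "z \<in> {0}"
      using inj_onD[OF f(4)] span_zero by blast
  qed
  then show ?thesis
    using dense_lineable_if_independent_selection[OF vector_space_axioms U(2) f(1-3)] by blast
qed

theorem lemma2p1:
  shows "(\<forall>(sm :: real \<Rightarrow> 'a::{ab_group_add,topological_space} \<Rightarrow> 'a) Y (A :: 'c set).
            tvs sm \<and> module.subspace sm Y \<and> weight_le A TYPE('a) \<and> codim_eq sm Y A
            \<longrightarrow> dense_lineable sm A (UNIV - Y))
       \<and> (\<forall>(sm :: complex \<Rightarrow> 'b::{ab_group_add,topological_space} \<Rightarrow> 'b) Y (A :: 'd set).
            tvs sm \<and> module.subspace sm Y \<and> weight_le A TYPE('b) \<and> codim_eq sm Y A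
            \<longrightarrow> dense_lineable sm A (UNIV - Y))"
  by (blast intro: tvs_dense_lineable_complement)

end
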